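(* Let $\lambda=(a,b)$ with $a\ge b\ge1$. Then $$\xi(q)=\sum_k|S_k(\lambda)|q^k=\sum_{i\ge0}|\mathcal D_\lambda(i)|\,(1+q)^i .$$
   Context: $N=a+b$; the shape $(a,b)$ has $a$ boxes in row 1 and $b$ in row 2, left-justified. A row-standard filling uses $1,\dots,N$ once each with rows strictly increasing. Inversion pairs of a row-standard $\tau$: for a box $c$ and $r\ge1$ let $c^{(r)}$ be the box $r$ positions to its right, if it exists. For distinct boxes $c,c'$ in the same column with $\tau(c)<\tau(c')$, let $r\ge1$ be least such that one of $c^{(r)},c'^{(r)}$ does not exist or $\tau(c^{(r)})\ne\tau(c'^{(r)})$; $(c,c')$ is an inversion pair if either (one does not exist and $c$ lies below $c'$) or (both exist and $\tau(c^{(r)})>\tau(c'^{(r)})$). $S_k(\lambda)$: row-standard fillings of shape $\lambda$ with exactly $k$ inversion pairs. A Dyck path of shape $(a,b)$ is a lattice path $\{v_0,\dots,v_{a+b}\}$ from $(0,0)$ to $(a,b)$ with steps $(1,0)$ or $(0,1)$ and every point $(x,y)$ satisfying $y\le x$; $\mathcal D_\lambda$ is the set of these. A return to ground is an index $i\ge1$ with $v_i=(x,x)$ for some $x$; $\mathcal D_\lambda(i)$ is the set of paths in $\mathcal D_\lambda$ with exactly $i$ returns to ground. *)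

theory Defs
  imports "HOL-Computational_Algebra.Polynomial"
begin

(* Boxes of the two-row shape (a,b): (row, column), rows 0 (= row 1, top) and
   1 (= row 2, bottom), columns 0-based. *)
definition boxes :: "nat \<Rightarrow> nat \<Rightarrow> (nat \<times> nat) set" where
  "boxes a b = {(0, j) | j. j < a} \<union> {(1, j) | j. j < b}"

(* row-standard fillings; tau is taken to be 0 outside the shape so that
   fillings are determined by their values on the boxes *)
definition row_standard :: "nat \<Rightarrow> nat \<Rightarrow> ((nat \<times> nat) \<Rightarrow> nat) set" where
  "row_standard a b = {\<tau>. bij_betw \<tau> (boxes a b) {1..a+b}
      \<and> (\<forall>c. c \<notin> boxes a b \<longrightarrow> \<tau> c = 0)
      \<and> (\<forall>i j. (i, Suc j) \<in> boxes a b \<longrightarrow> \<tau> (i, j) < \<tau> (i, Suc j))}"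

definition shiftr :: "nat \<times> nat \<Rightarrow> nat \<Rightarrow> nat \<times> nat" where
  "shiftr c r = (fst c, snd c + r)"

definition is_inversion_pair ::
  "nat \<Rightarrow> nat \<Rightarrow> ((nat \<times> nat) \<Rightarrow> nat) \<Rightarrow> nat \<times> nat \<Rightarrow> nat \<times> nat \<Rightarrow> bool" where
  "is_inversion_pair a b \<tau> c c' \<longleftrightarrow>
     c \<in> boxes a b \<and> c' \<in> boxes a b \<and> c \<noteq> c' \<and> snd c = snd c' \<and> \<tau> c < \<tau> c' \<and>
     (let r = (LEAST r. 1 \<le> r \<and> (shiftr c r \<notin> boxes a b \<or> shiftr c' r \<notin> boxes a b
                    \<or> \<tau> (shiftr c r) \<noteq> \<tau> (shiftr c' r)))
      in ((shiftr c r \<notin> boxes a b \<or> shiftr c' r \<notin> boxes a b) \<and> fst c > fst c')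
         \<or> (shiftr c r \<in> boxes a b \<and> shiftr c' r \<in> boxes a b
            \<and> \<tau> (shiftr c r) > \<tau> (shiftr c' r)))"

definition num_inversions :: "nat \<Rightarrow> nat \<Rightarrow> ((nat \<times> nat) \<Rightarrow> nat) \<Rightarrow> nat" where
  "num_inversions a b \<tau> = card {(c, c'). is_inversion_pair a b \<tau> c c'}"

definition S :: "nat \<Rightarrow> nat \<Rightarrow> nat \<Rightarrow> ((nat \<times> nat) \<Rightarrow> nat) set" where
  "S a b k = {\<tau> \<in> row_standard a b. num_inversions a b \<tau> = k}"

definition dyck_paths :: "nat \<Rightarrow> nat \<Rightarrow> (nat \<times> nat) list set" where
  "dyck_paths a b = {v. length v = a + b + 1 \<and> v ! 0 = (0, 0) \<and> v ! (a + b) = (a, b)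
      \<and> (\<forall>i < a + b. v ! Suc i = (fst (v ! i) + 1, snd (v ! i))
                    \<or> v ! Suc i = (fst (v ! i), snd (v ! i) + 1))
      \<and> (\<forall>i \<le> a + b. snd (v ! i) \<le> fst (v ! i))}"

definition returns :: "(nat \<times> nat) list \<Rightarrow> nat" where
  "returns v = card {i. 1 \<le> i \<and> i < length v \<and> fst (v ! i) = snd (v ! i)}"

definition D :: "nat \<Rightarrow> nat \<Rightarrow> nat \<Rightarrow> (nat \<times> nat) list set" where
  "D a b i = {v \<in> dyck_paths a b. returns v = i}"

end

theory Submission
  imports Defs
begin

text \<open>
  Read a row-standard filling as the lattice word whose \<open>i\<close>-th letter records whether \<open>i\<close>
  lies in the bottom row. The top entry of column \<open>j\<close> is the smaller one iff the word is above
  the axis after \<open>2j + 1\<close> letters, so inversion pairs correspond to the returns to the axis at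
  which the word passes to the other side, and \<open>\<xi>(q)\<close> is the sum of \<open>q\<^sup>c\<close> over all words of
  length \<open>a + b\<close> and height \<open>a - b\<close>, \<open>c\<close> counting these crossings. Building words letter by
  letter shows that this sum equals the sum of \<open>(1 + q)\<^sup>z\<close> over the words that stay weakly above
  the axis, \<open>z\<close> counting their zeros: a zero can be left on either side, and exactly one of the
  two choices is a crossing. Those words are the Dyck paths, and their zeros are the returns to
  ground.
\<close>

section \<open>Lattice words\<close>

(* False is an east step (1,0), True a north step (0,1); the height is x - y. *)
definition height :: "bool list \<Rightarrow> int" where
  "height w = int (count_list w False) - int (count_list w True)"

definition prefix_height :: "bool list \<Rightarrow> nat \<Rightarrow> int" where
  "prefix_height w k = height (take k w)"

(* Step k (counted from 1) joins two heights that differ by one, so it lies below the axis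
   iff their sum is negative. *)
definition step_below :: "bool list \<Rightarrow> nat \<Rightarrow> bool" where
  "step_below w k \<longleftrightarrow> prefix_height w (k - 1) + prefix_height w k < 0"

(* c is the side of a virtual step after the last letter. *)
definition crossing_at :: "bool list \<Rightarrow> bool \<Rightarrow> nat \<Rightarrow> bool" where
  "crossing_at w c k \<longleftrightarrow> prefix_height w k = 0
      \<and> step_below w k \<noteq> (if k < length w then step_below w (Suc k) else c)"

definition crossings :: "bool list \<Rightarrow> bool \<Rightarrow> nat" where
  "crossings w c = card {k \<in> {1..length w}. crossing_at w c k}"

definition nonneg_word :: "bool list \<Rightarrow> bool" where
  "nonneg_word w \<longleftrightarrow> (\<forall>k \<le> length w. 0 \<le> prefix_height w k)"

definition zeros :: "bool list \<Rightarrow> nat" where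
  "zeros w = card {k. 1 \<le> k \<and> k \<le> length w \<and> prefix_height w k = 0}"

definition crossing_sum :: "'a::comm_semiring_1 \<Rightarrow> nat \<Rightarrow> int \<Rightarrow> bool \<Rightarrow> 'a" where
  "crossing_sum q n h c = (\<Sum>w | length w = n \<and> height w = h. q ^ crossings w c)"

definition return_sum :: "'a::comm_semiring_1 \<Rightarrow> nat \<Rightarrow> int \<Rightarrow> 'a" where
  "return_sum q n h = (\<Sum>w | length w = n \<and> nonneg_word w \<and> height w = h. (1 + q) ^ zeros w)"

lemma finite_words_length: "finite {w::bool list. length w = n \<and> P w}"
proof -
  have "finite {w::bool list. set w \<subseteq> UNIV \<and> length w = n}"
    by (rule finite_lists_length_eq) simp
  then show ?thesis by (rule finite_subset[rotated]) auto
qed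

lemma sum_words_Suc:
  "(\<Sum>w | length w = Suc n \<and> P w. g w) =
   (\<Sum>w | length w = n \<and> P (w @ [False]). g (w @ [False])) +
   (\<Sum>w | length w = n \<and> P (w @ [True]). g (w @ [True]))"
proof -
  have split: "{w. length w = Suc n \<and> P w} =
     (\<lambda>w. w @ [False]) ` {w. length w = n \<and> P (w @ [False])} \<union>
     (\<lambda>w. w @ [True]) ` {w. length w = n \<and> P (w @ [True])}"
  proof (rule set_eqI, rule iffI)
    fix w assume "w \<in> {w. length w = Suc n \<and> P w}"
    moreover obtain u x where "w = u @ [x]"
      using calculation by (metis (mono_tags) length_Suc_conv_rev mem_Collect_eq)
    ultimately show "w \<in> (\<lambda>w. w @ [False]) ` {w. length w = n \<and> P (w @ [False])} \<union>
        (\<lambda>w. w @ [True]) ` {w. length w = n \<and> P (w @ [True])}"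
      by (cases x) auto
  qed auto
  show ?thesis
    unfolding split
    by (subst sum.union_disjoint) (auto intro: finite_words_length simp: sum.reindex inj_on_def)
qed

lemma height_snoc [simp]: "height (w @ [x]) = height w + (if x then -1 else 1)"
  by (simp add: height_def)

lemma prefix_height_snoc: "k \<le> length w \<Longrightarrow> prefix_height (w @ [x]) k = prefix_height w k"
  by (simp add: prefix_height_def)

lemma prefix_height_length [simp]: "prefix_height w (length w) = height w"
  by (simp add: prefix_height_def)

lemma step_below_snoc: "k \<le> length w \<Longrightarrow> step_below (w @ [x]) k = step_below w k"
  by (simp add: step_below_def prefix_height_snoc)

lemma step_below_last:
  "step_below (w @ [x]) (Suc (length w)) \<longleftrightarrow> 2 * height (w @ [x]) < (if x then -1 else 1)"
  using prefix_height_length[of "w @ [x]"]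
  by (simp add: step_below_def prefix_height_snoc) arith

lemma count_False_True: "count_list w False + count_list w True = length w"
  by (induction w) auto

lemma prefix_height_Suc_diff: "k < length w \<Longrightarrow> \<bar>prefix_height w (Suc k) - prefix_height w k\<bar> = 1"
  by (simp add: prefix_height_def take_Suc_conv_app_nth)

lemma prefix_height_count_True:
  "k \<le> length w \<Longrightarrow> prefix_height w k = int k - 2 * int (count_list (take k w) True)"
  using count_False_True[of "take k w"] by (simp add: prefix_height_def height_def)

lemma count_list_take_le: "count_list (take k w) x \<le> count_list w x"
  by (metis append_take_drop_id count_list_append le_add1)

lemma crossing_at_snoc:
  "k \<le> length w \<Longrightarrow>
     crossing_at (w @ [x]) c k = crossing_at w (step_below (w @ [x]) (Suc (length w))) k"
  by (auto simp: crossing_at_def prefix_height_snoc step_below_snoc)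

lemma crossing_at_last:
  "crossing_at (w @ [x]) c (Suc (length w)) \<longleftrightarrow>
     height (w @ [x]) = 0 \<and> step_below (w @ [x]) (Suc (length w)) \<noteq> c"
  using prefix_height_length[of "w @ [x]"] by (simp add: crossing_at_def)

lemma crossings_snoc:
  "crossings (w @ [x]) c = crossings w (step_below (w @ [x]) (Suc (length w)))
     + (if crossing_at (w @ [x]) c (Suc (length w)) then 1 else 0)"
proof -
  let ?s = "step_below (w @ [x]) (Suc (length w))"
  have "{k \<in> {1..Suc (length w)}. crossing_at (w @ [x]) c k}
      = {k \<in> {1..length w}. crossing_at w ?s k}
        \<union> (if crossing_at (w @ [x]) c (Suc (length w)) then {Suc (length w)} else {})"
    by (auto simp: crossing_at_snoc le_Suc_eq)
  then show ?thesis by (simp add: crossings_def card_insert_if)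
qed

lemma zeros_snoc: "zeros (w @ [x]) = zeros w + (if height (w @ [x]) = 0 then 1 else 0)"
proof -
  let ?A = "{k. 1 \<le> k \<and> k \<le> length w \<and> prefix_height w k = 0}"
  have "{k. 1 \<le> k \<and> k \<le> length (w @ [x]) \<and> prefix_height (w @ [x]) k = 0}
     = ?A \<union> (if height (w @ [x]) = 0 then {Suc (length w)} else {})"
    using prefix_height_length[of "w @ [x]"] by (auto simp: prefix_height_snoc le_Suc_eq)
  moreover have "finite ?A" by (rule finite_subset[of _ "{..length w}"]) auto
  ultimately show ?thesis by (auto simp: zeros_def card_insert_if)
qed

lemma nonneg_word_snoc: "nonneg_word (w @ [x]) \<longleftrightarrow> nonneg_word w \<and> 0 \<le> height (w @ [x])"
  using prefix_height_length[of "w @ [x]"]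
  by (auto simp: nonneg_word_def prefix_height_snoc le_Suc_eq)

lemma crossing_sum_0: "crossing_sum q 0 h c = (if h = 0 then 1 else 0)"
proof -
  have "{w::bool list. length w = 0 \<and> height w = h} = (if h = 0 then {[]} else {})"
    by (auto simp: height_def)
  moreover have "crossings [] c = 0" by (simp add: crossings_def)
  ultimately show ?thesis by (simp add: crossing_sum_def)
qed

lemma return_sum_0: "return_sum q 0 h = (if h = 0 then 1 else 0)"
proof -
  have "{w::bool list. length w = 0 \<and> nonneg_word w \<and> height w = h} = (if h = 0 then {[]} else {})"
    by (auto simp: height_def nonneg_word_def prefix_height_def)
  moreover have "zeros [] = 0" by (simp add: zeros_def)
  ultimately show ?thesis by (simp add: return_sum_def)
qed

lemma crossing_sum_Suc:
  "crossing_sum q (Suc n) h c =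
     crossing_sum q n (h - 1) (h \<le> 0) * q ^ (if h = 0 \<and> \<not> c then 1 else 0)
   + crossing_sum q n (h + 1) (h < 0) * q ^ (if h = 0 \<and> c then 1 else 0)"
proof -
  have sides: "2 * h < 1 \<longleftrightarrow> h \<le> 0" "2 * h < - 1 \<longleftrightarrow> h < 0" by arith+
  have "crossing_sum q (Suc n) h c =
        (\<Sum>w | length w = n \<and> height w = h - 1. q ^ crossings (w @ [False]) c)
      + (\<Sum>w | length w = n \<and> height w = h + 1. q ^ crossings (w @ [True]) c)"
    unfolding crossing_sum_def by (subst sum_words_Suc) (simp add: algebra_simps)
  also have "\<dots> =
        (\<Sum>w | length w = n \<and> height w = h - 1.
           q ^ crossings w (h \<le> 0) * q ^ (if h = 0 \<and> \<not> c then 1 else 0))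
      + (\<Sum>w | length w = n \<and> height w = h + 1.
           q ^ crossings w (h < 0) * q ^ (if h = 0 \<and> c then 1 else 0))"
    by (intro arg_cong2[where f = "(+)"] sum.cong refl)
       (auto simp: crossings_snoc crossing_at_last step_below_last power_add sides)
  finally show ?thesis by (simp add: crossing_sum_def sum_distrib_right)
qed

lemma return_sum_Suc:
  "return_sum q (Suc n) h =
     (if 0 \<le> h
      then (return_sum q n (h - 1) + return_sum q n (h + 1)) * (1 + q) ^ (if h = 0 then 1 else 0)
      else 0)"
proof -
  have "return_sum q (Suc n) h =
        (\<Sum>w | length w = n \<and> nonneg_word w \<and> 0 \<le> h \<and> height w = h - 1.
           (1 + q) ^ zeros (w @ [False]))
      + (\<Sum>w | length w = n \<and> nonneg_word w \<and> 0 \<le> h \<and> height w = h + 1.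
           (1 + q) ^ zeros (w @ [True]))"
    unfolding return_sum_def
    by (subst sum_words_Suc, intro arg_cong2[where f = "(+)"] sum.cong refl)
       (auto simp: nonneg_word_snoc)
  also have "\<dots> =
        (\<Sum>w | length w = n \<and> nonneg_word w \<and> 0 \<le> h \<and> height w = h - 1.
           (1 + q) ^ zeros w * (1 + q) ^ (if h = 0 then 1 else 0))
      + (\<Sum>w | length w = n \<and> nonneg_word w \<and> 0 \<le> h \<and> height w = h + 1.
           (1 + q) ^ zeros w * (1 + q) ^ (if h = 0 then 1 else 0))"
    by (intro arg_cong2[where f = "(+)"] sum.cong refl) (auto simp: zeros_snoc power_add)
  finally show ?thesis
    by (cases "0 \<le> h") (simp_all add: return_sum_def sum_distrib_right distrib_right)
qed

lemma return_sum_neg: "h < 0 \<Longrightarrow> return_sum q n h = 0"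
  by (cases n) (simp_all add: return_sum_0 return_sum_Suc)

(* At height 0 the two possible last letters contribute q^0 and q^1, i.e. the factor 1 + q. *)
theorem crossing_sum_eq_return_sum: "crossing_sum q n h c = return_sum q n \<bar>h\<bar>"
proof (induction n arbitrary: h c)
  case 0
  then show ?case by (simp add: crossing_sum_0 return_sum_0)
next
  case (Suc n)
  consider "h = 0" | "h > 0" | "h < 0" by linarith
  then show ?case
  proof cases
    case 1
    then show ?thesis
      by (cases c) (simp_all add: crossing_sum_Suc return_sum_Suc Suc.IH return_sum_neg algebra_simps)
  next
    case 2
    then show ?thesis by (simp add: crossing_sum_Suc return_sum_Suc Suc.IH add.commute)
  next
    case 3
    have abs: "\<bar>h - 1\<bar> = \<bar>h\<bar> + 1" "\<bar>h + 1\<bar> = \<bar>h\<bar> - 1" using 3 by simp_all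
    have "crossing_sum q (Suc n) h c = return_sum q n \<bar>h - 1\<bar> + return_sum q n \<bar>h + 1\<bar>"
      using 3 by (simp add: crossing_sum_Suc Suc.IH)
    moreover have "return_sum q (Suc n) \<bar>h\<bar> = return_sum q n (\<bar>h\<bar> - 1) + return_sum q n (\<bar>h\<bar> + 1)"
      using 3 by (simp add: return_sum_Suc)
    ultimately show ?thesis unfolding abs by (simp only: add.commute)
  qed
qed

section \<open>Dyck paths\<close>

lemma sum_card_fibres:
  fixes f :: "'a \<Rightarrow> nat"
  assumes "finite A" and "\<And>x. x \<in> A \<Longrightarrow> f x \<le> N"
  shows "(\<Sum>i\<le>N. of_nat (card {x \<in> A. f x = i}) * g i) = (\<Sum>x\<in>A. g (f x))"
proof -
  have "(\<Sum>i\<le>N. of_nat (card {x \<in> A. f x = i}) * g i) = (\<Sum>i\<le>N. \<Sum>x | x \<in> A \<and> f x = i. g (f x))"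
    by (intro sum.cong refl) simp
  also have "\<dots> = (\<Sum>x\<in>A. g (f x))"
    by (rule sum.group) (use assms in auto)
  finally show ?thesis .
qed

definition lattice_point :: "bool list \<Rightarrow> nat \<Rightarrow> nat \<times> nat" where
  "lattice_point w k = (count_list (take k w) False, count_list (take k w) True)"

definition path_of_word :: "bool list \<Rightarrow> (nat \<times> nat) list" where
  "path_of_word w = map (lattice_point w) [0..<Suc (length w)]"

definition word_of_path :: "(nat \<times> nat) list \<Rightarrow> bool list" where
  "word_of_path v = map (\<lambda>i. snd (v ! Suc i) \<noteq> snd (v ! i)) [0..<length v - 1]"

lemma lattice_point_0 [simp]: "lattice_point w 0 = (0, 0)"
  by (simp add: lattice_point_def)

lemma lattice_point_Suc:
  "k < length w \<Longrightarrow> lattice_point w (Suc k) =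
     (if w ! k then (fst (lattice_point w k), snd (lattice_point w k) + 1)
      else (fst (lattice_point w k) + 1, snd (lattice_point w k)))"
  by (simp add: lattice_point_def take_Suc_conv_app_nth)

lemma prefix_height_lattice_point:
  "prefix_height w k = int (fst (lattice_point w k)) - int (snd (lattice_point w k))"
  by (simp add: prefix_height_def height_def lattice_point_def)

lemma path_of_word_in_dyck_paths_iff:
  "path_of_word w \<in> dyck_paths a b \<longleftrightarrow> length w = a + b \<and> nonneg_word w \<and> height w = int a - int b"
proof
  assume dyck: "path_of_word w \<in> dyck_paths a b"
  then have len: "length w = a + b" by (simp add: dyck_paths_def path_of_word_def)
  have "lattice_point w (a + b) = (a, b)"
    using dyck len by (simp add: dyck_paths_def path_of_word_def del: upt_Suc)
  then have "count_list w False = a" "count_list w True = b"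
    using len by (simp_all add: lattice_point_def)
  moreover have "nonneg_word w"
    unfolding nonneg_word_def
  proof (intro allI impI)
    fix k assume "k \<le> length w"
    moreover have "\<forall>i \<le> a + b. snd (path_of_word w ! i) \<le> fst (path_of_word w ! i)"
      using dyck by (simp add: dyck_paths_def)
    ultimately show "0 \<le> prefix_height w k"
      using len by (simp add: path_of_word_def prefix_height_lattice_point del: upt_Suc)
  qed
  ultimately show "length w = a + b \<and> nonneg_word w \<and> height w = int a - int b"
    using len by (simp add: height_def)
next
  assume "length w = a + b \<and> nonneg_word w \<and> height w = int a - int b"
  then have len: "length w = a + b" and nonneg: "nonneg_word w"
    and counts: "count_list w False = a" "count_list w True = b"
    using count_False_True[of w] by (auto simp: height_def)
  show "path_of_word w \<in> dyck_paths a b"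
    unfolding dyck_paths_def
  proof (intro CollectI conjI allI impI)
    show "length (path_of_word w) = a + b + 1" using len by (simp add: path_of_word_def)
    show "path_of_word w ! 0 = (0, 0)" by (simp add: path_of_word_def del: upt_Suc)
    show "path_of_word w ! (a + b) = (a, b)"
      using len counts by (simp add: path_of_word_def lattice_point_def del: upt_Suc)
    fix i
    show "i < a + b \<Longrightarrow>
        path_of_word w ! Suc i = (fst (path_of_word w ! i) + 1, snd (path_of_word w ! i)) \<or>
        path_of_word w ! Suc i = (fst (path_of_word w ! i), snd (path_of_word w ! i) + 1)"
      using len by (simp add: path_of_word_def lattice_point_Suc del: upt_Suc)
    show "i \<le> a + b \<Longrightarrow> snd (path_of_word w ! i) \<le> fst (path_of_word w ! i)"
      using len nonneg by (simp add: path_of_word_def nonneg_word_def prefix_height_lattice_point del: upt_Suc)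
  qed
qed

lemma word_of_path_of_word: "word_of_path (path_of_word w) = w"
  by (rule nth_equalityI)
     (auto simp: word_of_path_def path_of_word_def lattice_point_Suc simp del: upt_Suc)

lemma path_of_word_of_path:
  assumes "v \<in> dyck_paths a b"
  shows "path_of_word (word_of_path v) = v"
proof -
  have len: "length v = a + b + 1" and len_word: "length (word_of_path v) = a + b"
    using assms by (simp_all add: dyck_paths_def word_of_path_def)
  have "lattice_point (word_of_path v) k = v ! k" if "k \<le> a + b" for k
    using that
  proof (induction k)
    case 0
    then show ?case using assms by (simp add: dyck_paths_def)
  next
    case (Suc k)
    then have "v ! Suc k = (fst (v ! k) + 1, snd (v ! k)) \<or> v ! Suc k = (fst (v ! k), snd (v ! k) + 1)"
      using assms by (simp add: dyck_paths_def)
    with Suc len show ?case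
      by (auto simp: lattice_point_Suc len_word word_of_path_def)
  qed
  then show ?thesis
    using len len_word by (intro nth_equalityI) (auto simp: path_of_word_def simp del: upt_Suc)
qed

lemma returns_path_of_word: "returns (path_of_word w) = zeros w"
proof -
  have "{i. 1 \<le> i \<and> i < length (path_of_word w) \<and> fst (path_of_word w ! i) = snd (path_of_word w ! i)}
      = {k. 1 \<le> k \<and> k \<le> length w \<and> prefix_height w k = 0}"
    by (auto simp: path_of_word_def prefix_height_lattice_point simp del: upt_Suc)
  then show ?thesis by (simp add: returns_def zeros_def)
qed

lemma bij_betw_path_of_word:
  "bij_betw path_of_word {w. length w = a + b \<and> nonneg_word w \<and> height w = int a - int b}
     (dyck_paths a b)"
proof (rule bij_betw_byWitness[where f' = word_of_path])
  show "word_of_path ` dyck_paths a b \<subseteq> {w. length w = a + b \<and> nonneg_word w \<and> height w = int a - int b}"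
    using path_of_word_in_dyck_paths_iff path_of_word_of_path by fastforce
qed (auto simp: word_of_path_of_word path_of_word_of_path path_of_word_in_dyck_paths_iff)

lemma finite_dyck_paths: "finite (dyck_paths a b)"
  using bij_betw_finite[OF bij_betw_path_of_word] finite_words_length by (rule iffD1)

lemma returns_le: "v \<in> dyck_paths a b \<Longrightarrow> returns v \<le> a + b"
proof -
  assume "v \<in> dyck_paths a b"
  then have "length v = a + b + 1" by (simp add: dyck_paths_def)
  then have "{i. 1 \<le> i \<and> i < length v \<and> fst (v ! i) = snd (v ! i)} \<subseteq> {1..a + b}" by auto
  then have "returns v \<le> card {1..a + b}"
    unfolding returns_def by (intro card_mono) auto
  then show ?thesis by simp
qed

lemma sum_dyck_paths_returns:
  "(\<Sum>v\<in>dyck_paths a b. (1 + q) ^ returns v) = return_sum q (a + b) (int a - int b)"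
proof -
  have "return_sum q (a + b) (int a - int b) =
      (\<Sum>w | length w = a + b \<and> nonneg_word w \<and> height w = int a - int b.
         (1 + q) ^ returns (path_of_word w))"
    unfolding return_sum_def returns_path_of_word ..
  also have "\<dots> = (\<Sum>v\<in>dyck_paths a b. (1 + q) ^ returns v)"
    by (rule sum.reindex_bij_betw[OF bij_betw_path_of_word])
  finally show ?thesis ..
qed

lemma D_polynomial_eq_return_sum:
  "(\<Sum>i\<le>a+b. of_nat (card (D a b i)) * [:1, 1:] ^ i) =
     return_sum [:0, 1::'a::comm_semiring_1:] (a + b) (int a - int b)"
proof -
  have "(\<Sum>i\<le>a+b. of_nat (card (D a b i)) * [:1, 1:] ^ i) =
      (\<Sum>v\<in>dyck_paths a b. [:1, 1::'a:] ^ returns v)"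
    unfolding D_def by (rule sum_card_fibres[OF finite_dyck_paths returns_le])
  also have "\<dots> = return_sum [:0, 1:] (a + b) (int a - int b)"
    using sum_dyck_paths_returns[where q = "[:0, 1::'a:]"] by (simp add: one_pCons)
  finally show ?thesis .
qed

section \<open>Crossings of words ending at a nonnegative height\<close>

lemma zero_between_unit_steps:
  fixes x y z :: int
  assumes "even y" and "\<bar>x - y\<bar> = 1" and "\<bar>z - y\<bar> = 1"
  shows "y = 0 \<and> (x + y < 0) \<noteq> (y + z < 0) \<longleftrightarrow> (0 < x) \<noteq> (0 < z)"
  using assms by (elim evenE) (auto simp: abs_eq_iff; presburger)

lemma zero_after_unit_step:
  fixes x y :: int
  assumes "even y" and "0 \<le> y" and "\<bar>x - y\<bar> = 1"
  shows "y = 0 \<and> x + y < 0 \<longleftrightarrow> \<not> 0 < x"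
  using assms by (elim evenE) (auto simp: abs_eq_iff; presburger)

definition sign_changes :: "(nat \<Rightarrow> bool) \<Rightarrow> nat \<Rightarrow> nat set" where
  "sign_changes s n = {j. j < n \<and> (if Suc j < n then s j \<noteq> s (Suc j) else \<not> s j)}"

context
  fixes w :: "bool list" and a b :: nat
  assumes length_w: "length w = a + b" and count_True: "count_list w True = b"
begin

lemma zero_prefix_height_position:
  assumes "1 \<le> k" "k \<le> a + b" "prefix_height w k = 0"
  obtains j where "j < b" "k = 2 * j + 2"
proof
  have "k = 2 * count_list (take k w) True"
    using assms prefix_height_count_True[of k w] length_w by simp
  moreover have "count_list (take k w) True \<le> b"
    using count_list_take_le count_True by metis
  ultimately show "count_list (take k w) True - 1 < b" "k = 2 * (count_list (take k w) True - 1) + 2"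
    using assms(1) by auto
qed

lemma crossing_at_iff_sign_change:
  assumes "b \<le> a" and "j < b"
  shows "crossing_at w False (2 * j + 2) \<longleftrightarrow> j \<in> sign_changes (\<lambda>j. 0 < prefix_height w (2 * j + 1)) b"
proof -
  define h where "h k = prefix_height w k" for k
  have "2 * j + 2 \<le> a + b" using assms \<open>b \<le> a\<close> by simp
  then have even2: "even (h (2 * j + 2))" and step2: "\<bar>h (2 * j + 1) - h (2 * j + 2)\<bar> = 1"
    using prefix_height_count_True[of "2 * j + 2" w] prefix_height_Suc_diff[of "2 * j + 1" w]
    by (simp_all add: h_def length_w abs_minus_commute)
  have below: "step_below w (2 * j + 2) \<longleftrightarrow> h (2 * j + 1) + h (2 * j + 2) < 0"
    by (simp add: step_below_def h_def)
  show ?thesis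
  proof (cases "Suc j < b")
    case True
    then have "2 * j + 3 \<le> a + b" using \<open>b \<le> a\<close> by simp
    then have step3: "\<bar>h (2 * j + 3) - h (2 * j + 2)\<bar> = 1"
      using prefix_height_Suc_diff[of "2 * j + 2" w] by (simp add: h_def length_w numeral_3_eq_3)
    have "crossing_at w False (2 * j + 2) \<longleftrightarrow>
        h (2 * j + 2) = 0 \<and> (h (2 * j + 1) + h (2 * j + 2) < 0) \<noteq> (h (2 * j + 2) + h (2 * j + 3) < 0)"
      using \<open>2 * j + 3 \<le> a + b\<close> length_w
      by (simp add: crossing_at_def below h_def step_below_def numeral_3_eq_3)
    also have "\<dots> \<longleftrightarrow> (0 < h (2 * j + 1)) \<noteq> (0 < h (2 * j + 3))"
      by (rule zero_between_unit_steps[OF even2 step2 step3])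
    finally show ?thesis
      using True assms by (simp add: sign_changes_def h_def numeral_3_eq_3 add_ac)
  next
    case False
    then have last: "Suc j = b" using assms by simp
    have nonneg2: "0 \<le> h (2 * j + 2)"
      using prefix_height_count_True[of "2 * j + 2" w] count_list_take_le[of "2 * j + 2" w True]
        count_True last \<open>2 * j + 2 \<le> a + b\<close> by (simp add: h_def length_w)
    have not_below3: "\<not> step_below w (Suc (2 * j + 2))" if "2 * j + 2 < a + b"
    proof -
      have "0 < h (2 * j + 3)"
        using prefix_height_count_True[of "2 * j + 3" w] count_list_take_le[of "2 * j + 3" w True]
          count_True last that by (simp add: h_def length_w)
      then show ?thesis using nonneg2 by (simp add: step_below_def h_def numeral_3_eq_3)
    qed
    have "crossing_at w False (2 * j + 2) \<longleftrightarrow> h (2 * j + 2) = 0 \<and> h (2 * j + 1) + h (2 * j + 2) < 0"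
      using not_below3 below length_w by (auto simp: crossing_at_def h_def)
    also have "\<dots> \<longleftrightarrow> \<not> 0 < h (2 * j + 1)"
      by (rule zero_after_unit_step[OF even2 nonneg2 step2])
    finally show ?thesis
      using last by (simp add: sign_changes_def h_def)
  qed
qed

lemma crossings_eq_card_sign_changes:
  assumes "b \<le> a"
  shows "crossings w False = card (sign_changes (\<lambda>j. 0 < prefix_height w (2 * j + 1)) b)"
proof -
  let ?J = "sign_changes (\<lambda>j. 0 < prefix_height w (2 * j + 1)) b"
  have "{k \<in> {1..length w}. crossing_at w False k} = (\<lambda>j. 2 * j + 2) ` ?J"
  proof (rule set_eqI, rule iffI)
    fix k assume k: "k \<in> {k \<in> {1..length w}. crossing_at w False k}"
    then obtain j where "j < b" "k = 2 * j + 2"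
      using zero_prefix_height_position length_w by (auto simp: crossing_at_def)
    with k crossing_at_iff_sign_change[OF assms] show "k \<in> (\<lambda>j. 2 * j + 2) ` ?J" by auto
  next
    fix k assume "k \<in> (\<lambda>j. 2 * j + 2) ` ?J"
    then obtain j where "j \<in> ?J" "k = 2 * j + 2" by blast
    moreover have "j < b" using \<open>j \<in> ?J\<close> by (simp add: sign_changes_def)
    ultimately show "k \<in> {k \<in> {1..length w}. crossing_at w False k}"
      using crossing_at_iff_sign_change[OF assms] length_w assms by auto
  qed
  moreover have "inj_on (\<lambda>j::nat. 2 * j + 2) ?J" by (auto simp: inj_on_def)
  ultimately show ?thesis by (simp add: crossings_def card_image)
qed

end

section \<open>Row-standard fillings\<close>

lemma less_card_le_iff:
  fixes f :: "nat \<Rightarrow> 'a::linorder"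
  assumes mono: "\<And>i j. i < j \<Longrightarrow> j < n \<Longrightarrow> f i < f j" and "j < n"
  shows "j < card {i. i < n \<and> f i \<le> K} \<longleftrightarrow> f j \<le> K"
proof -
  let ?S = "{i. i < n \<and> f i \<le> K}"
  have "?S = {..<card ?S}"
  proof (cases "?S = {}")
    case False
    define m where "m = Max ?S"
    have "m \<in> ?S" unfolding m_def using False by (intro Max_in) auto
    have "?S = {..m}"
    proof
      show "?S \<subseteq> {..m}" by (auto simp: m_def)
      show "{..m} \<subseteq> ?S"
        using \<open>m \<in> ?S\<close> mono by (fastforce simp: le_less)
    qed
    then show ?thesis by (simp add: lessThan_Suc_atMost[symmetric])
  next
    case True
    then show ?thesis by (simp only: card.empty lessThan_0)
  qed
  then show ?thesis using \<open>j < n\<close> by (metis (no_types, lifting) lessThan_iff mem_Collect_eq)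
qed

lemma boxes_eq: "boxes a b = {0} \<times> {..<a} \<union> {1} \<times> {..<b}"
  by (auto simp: boxes_def)

lemma boxes_iff: "(r, j) \<in> boxes a b \<longleftrightarrow> r = 0 \<and> j < a \<or> r = 1 \<and> j < b"
  by (auto simp: boxes_def)

context
  fixes a b :: nat and \<tau> :: "nat \<times> nat \<Rightarrow> nat"
  assumes \<tau>: "\<tau> \<in> row_standard a b"
begin

lemma row_standard_inj: "inj_on \<tau> (boxes a b)"
  and row_standard_image: "\<tau> ` boxes a b = {1..a + b}"
  using \<tau> by (auto simp: row_standard_def bij_betw_def)

lemma row_standard_range: "c \<in> boxes a b \<Longrightarrow> 1 \<le> \<tau> c \<and> \<tau> c \<le> a + b"
  using row_standard_image by auto

lemma row_standard_outside: "c \<notin> boxes a b \<Longrightarrow> \<tau> c = 0"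
  using \<tau> by (cases c) (simp add: row_standard_def)

lemma row_standard_less: "(i, j') \<in> boxes a b \<Longrightarrow> j < j' \<Longrightarrow> \<tau> (i, j) < \<tau> (i, j')"
proof (induction j')
  case (Suc j')
  then have "(i, j') \<in> boxes a b" and "\<tau> (i, j') < \<tau> (i, Suc j')"
    using \<tau> by (auto simp: boxes_iff row_standard_def)
  with Suc show ?case by (cases "j = j'") auto
qed simp

lemma row_standard_le_iff:
  assumes "(r, j) \<in> boxes a b"
  shows "j < card {i. (r, i) \<in> boxes a b \<and> \<tau> (r, i) \<le> K} \<longleftrightarrow> \<tau> (r, j) \<le> K"
proof -
  define n where "n = (if r = 0 then a else b)"
  have row: "(r, i) \<in> boxes a b \<longleftrightarrow> i < n" for i
    using assms by (auto simp: boxes_iff n_def)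
  show ?thesis
    unfolding row by (rule less_card_le_iff) (use assms row row_standard_less in auto)
qed

lemma card_row_entries_le:
  assumes "K \<le> a + b"
  shows "card {i. (0, i) \<in> boxes a b \<and> \<tau> (0, i) \<le> K} + card {i. (1, i) \<in> boxes a b \<and> \<tau> (1, i) \<le> K}
    = K"
proof -
  have "\<tau> ` {c \<in> boxes a b. \<tau> c \<le> K} = {x \<in> \<tau> ` boxes a b. x \<le> K}" by auto
  also have "\<dots> = {1..K}" using assms by (auto simp: row_standard_image)
  finally have "bij_betw \<tau> {c \<in> boxes a b. \<tau> c \<le> K} {1..K}"
    by (auto simp: bij_betw_def intro: inj_on_subset[OF row_standard_inj])
  then have "K = card {c \<in> boxes a b. \<tau> c \<le> K}" by (simp add: bij_betw_same_card)
  also have "{c \<in> boxes a b. \<tau> c \<le> K} =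
      Pair 0 ` {i. (0, i) \<in> boxes a b \<and> \<tau> (0, i) \<le> K} \<union>
      Pair 1 ` {i. (1, i) \<in> boxes a b \<and> \<tau> (1, i) \<le> K}"
    by (auto simp: boxes_def)
  finally show ?thesis
    by (subst (asm) card_Un_disjoint) (auto simp: card_image inj_on_def boxes_iff)
qed

lemma first_difference_eq_1:
  assumes "c \<in> boxes a b" "c' \<in> boxes a b" "c \<noteq> c'" "snd c = snd c'"
  shows "(LEAST r. 1 \<le> r \<and> (shiftr c r \<notin> boxes a b \<or> shiftr c' r \<notin> boxes a b
            \<or> \<tau> (shiftr c r) \<noteq> \<tau> (shiftr c' r))) = 1"
proof (rule Least_equality)
  have "shiftr c 1 \<noteq> shiftr c' 1" using assms by (cases c, cases c') (auto simp: shiftr_def)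
  then show "1 \<le> (1::nat) \<and> (shiftr c 1 \<notin> boxes a b \<or> shiftr c' 1 \<notin> boxes a b
      \<or> \<tau> (shiftr c 1) \<noteq> \<tau> (shiftr c' 1))"
    using row_standard_inj by (auto dest: inj_onD)
qed simp

lemma inversion_pair_in_column:
  assumes "is_inversion_pair a b \<tau> c c'"
  obtains j where "j < b" "c = (0, j) \<and> c' = (1, j) \<or> c = (1, j) \<and> c' = (0, j)"
  using assms by (cases c, cases c') (auto simp: is_inversion_pair_def boxes_iff)

lemma column_entries_differ: "(0, j) \<in> boxes a b \<Longrightarrow> (1, j) \<in> boxes a b \<Longrightarrow> \<tau> (0, j) \<noteq> \<tau> (1, j)"
  using row_standard_inj by (auto dest: inj_onD)

(* The entries up to 2j + 1 fill initial segments of the two rows of total length 2j + 1,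
   which contain exactly one of the boxes (0, j) and (1, j). *)
lemma column_order_iff:
  assumes "b \<le> a" and "j < b"
  shows "\<tau> (0, j) < \<tau> (1, j) \<longleftrightarrow> 2 * j + 1 < \<tau> (1, j)"
proof -
  have boxes: "(0, j) \<in> boxes a b" "(1, j) \<in> boxes a b" using assms by (auto simp: boxes_iff)
  let ?K = "2 * j + 1"
  have "card {i. (0, i) \<in> boxes a b \<and> \<tau> (0, i) \<le> ?K} +
      card {i. (1, i) \<in> boxes a b \<and> \<tau> (1, i) \<le> ?K} = ?K"
    using assms by (intro card_row_entries_le) simp
  then show ?thesis
    using row_standard_le_iff[OF boxes(1), of ?K] row_standard_le_iff[OF boxes(2), of ?K] by linarith
qed

end

context
  fixes a b :: nat and \<tau> :: "nat \<times> nat \<Rightarrow> nat"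
  assumes \<tau>: "\<tau> \<in> row_standard a b" and "b \<le> a"
begin

lemma inversion_pair_top_bottom_iff:
  assumes "j < b"
  shows "is_inversion_pair a b \<tau> (0, j) (1, j) \<longleftrightarrow>
    \<tau> (0, j) < \<tau> (1, j) \<and> Suc j < b \<and> \<not> \<tau> (0, Suc j) < \<tau> (1, Suc j)"
proof -
  have boxes: "(0, j) \<in> boxes a b" "(1, j) \<in> boxes a b" using assms \<open>b \<le> a\<close> by (auto simp: boxes_iff)
  have first: "(LEAST r. 1 \<le> r \<and> (shiftr (0, j) r \<notin> boxes a b \<or> shiftr (1, j) r \<notin> boxes a b
      \<or> \<tau> (shiftr (0, j) r) \<noteq> \<tau> (shiftr (1, j) r))) = 1"
    using boxes by (intro first_difference_eq_1[OF \<tau>]) auto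
  have "Suc j < b \<Longrightarrow> \<tau> (0, Suc j) \<noteq> \<tau> (1, Suc j)"
    using column_entries_differ[OF \<tau>] \<open>b \<le> a\<close> by (simp add: boxes_iff)
  then show ?thesis
    unfolding is_inversion_pair_def first Let_def
    using boxes \<open>b \<le> a\<close> by (auto simp: shiftr_def boxes_iff)
qed

lemma inversion_pair_bottom_top_iff:
  assumes "j < b"
  shows "is_inversion_pair a b \<tau> (1, j) (0, j) \<longleftrightarrow>
    \<not> \<tau> (0, j) < \<tau> (1, j) \<and> (Suc j < b \<longrightarrow> \<tau> (0, Suc j) < \<tau> (1, Suc j))"
proof -
  have boxes: "(1, j) \<in> boxes a b" "(0, j) \<in> boxes a b" using assms \<open>b \<le> a\<close> by (auto simp: boxes_iff)
  have first: "(LEAST r. 1 \<le> r \<and> (shiftr (1, j) r \<notin> boxes a b \<or> shiftr (0, j) r \<notin> boxes a b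
      \<or> \<tau> (shiftr (1, j) r) \<noteq> \<tau> (shiftr (0, j) r))) = 1"
    using boxes by (intro first_difference_eq_1[OF \<tau>]) auto
  have "\<tau> (0, j) \<noteq> \<tau> (1, j)" and "Suc j < b \<Longrightarrow> \<tau> (0, Suc j) \<noteq> \<tau> (1, Suc j)"
    using column_entries_differ[OF \<tau>] boxes \<open>b \<le> a\<close> by (simp_all add: boxes_iff)
  then show ?thesis
    unfolding is_inversion_pair_def first Let_def
    using boxes \<open>b \<le> a\<close> assms by (auto simp: shiftr_def boxes_iff)
qed

lemma inversion_pair_iff_sign_change:
  assumes "j < b"
  shows "is_inversion_pair a b \<tau> (0, j) (1, j) \<or> is_inversion_pair a b \<tau> (1, j) (0, j) \<longleftrightarrow>
    j \<in> sign_changes (\<lambda>j. \<tau> (0, j) < \<tau> (1, j)) b"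
  using inversion_pair_top_bottom_iff[OF assms] inversion_pair_bottom_top_iff[OF assms] assms
  by (auto simp: sign_changes_def)

lemma num_inversions_eq_card_sign_changes:
  "num_inversions a b \<tau> = card (sign_changes (\<lambda>j. \<tau> (0, j) < \<tau> (1, j)) b)"
proof -
  let ?J = "sign_changes (\<lambda>j. \<tau> (0, j) < \<tau> (1, j)) b"
  define pair where
    "pair j = (if \<tau> (0, j) < \<tau> (1, j) then ((0::nat, j), (1::nat, j)) else ((1, j), (0, j)))" for j
  have pair_iff: "is_inversion_pair a b \<tau> (fst (pair j)) (snd (pair j)) \<longleftrightarrow> j \<in> ?J" if "j < b" for j
    using inversion_pair_iff_sign_change[OF that]
      inversion_pair_top_bottom_iff[OF that] inversion_pair_bottom_top_iff[OF that]
    by (auto simp: pair_def)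
  have "{(c, c'). is_inversion_pair a b \<tau> c c'} = pair ` ?J"
  proof (rule set_eqI, rule iffI)
    fix p assume "p \<in> {(c, c'). is_inversion_pair a b \<tau> c c'}"
    then obtain c c' where p: "p = (c, c')" and inv: "is_inversion_pair a b \<tau> c c'" by blast
    obtain j where j: "j < b" "c = (0, j) \<and> c' = (1, j) \<or> c = (1, j) \<and> c' = (0, j)"
      using inv by (rule inversion_pair_in_column[OF \<tau>])
    then have "pair j = p"
      using inv inversion_pair_top_bottom_iff[OF j(1)] inversion_pair_bottom_top_iff[OF j(1)]
      by (auto simp: p pair_def)
    moreover have "j \<in> ?J"
      using j inv inversion_pair_iff_sign_change[OF j(1)] by auto
    ultimately show "p \<in> pair ` ?J" by blast
  next
    fix p assume "p \<in> pair ` ?J"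
    then obtain j where "j \<in> ?J" "p = pair j" by blast
    moreover have "j < b" using \<open>j \<in> ?J\<close> by (simp add: sign_changes_def)
    ultimately show "p \<in> {(c, c'). is_inversion_pair a b \<tau> c c'}"
      using pair_iff by (simp add: case_prod_beta)
  qed
  moreover have "inj_on pair ?J" by (auto simp: inj_on_def pair_def)
  ultimately show ?thesis by (simp add: num_inversions_def card_image)
qed

end

section \<open>Row-standard fillings as lattice words\<close>

lemma sorted_list_of_set_image_lessThan:
  fixes f :: "nat \<Rightarrow> 'a::linorder"
  assumes "\<And>i j. i < j \<Longrightarrow> j < n \<Longrightarrow> f i < f j"
  shows "sorted_list_of_set (f ` {..<n}) = map f [0..<n]"
proof -
  have "inj_on f {..<n}"
    using assms by (intro inj_onI) (metis lessThan_iff linorder_neq_iff)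
  then have "sorted_wrt (<) (map f [0..<n]) \<and> set (map f [0..<n]) = f ` {..<n}
      \<and> length (map f [0..<n]) = card (f ` {..<n})"
    using assms by (auto simp: sorted_wrt_iff_nth_less card_image)
  then show ?thesis by (intro sorted_list_of_set_unique[THEN iffD1]) auto
qed

definition positions :: "bool list \<Rightarrow> bool \<Rightarrow> nat set" where
  "positions w x = Suc ` {i. i < length w \<and> w ! i = x}"

lemma finite_positions [simp]: "finite (positions w x)"
  by (simp add: positions_def)

lemma card_positions: "card (positions w x) = count_list w x"
  by (simp add: positions_def card_image count_list_eq_length_filter length_filter_conv_card eq_commute)

lemma positions_take: "positions (take K w) x = {k \<in> positions w x. k \<le> K}"
  by (auto simp: positions_def)

lemma positions_disjoint: "positions w False \<inter> positions w True = {}"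
  by (auto simp: positions_def)

lemma positions_union: "positions w False \<union> positions w True = {1..length w}"
proof -
  have "positions w False \<union> positions w True = Suc ` {..<length w}" by (auto simp: positions_def)
  then show ?thesis by (simp add: image_Suc_lessThan)
qed

lemma image_nth_lessThan_length: "(!) xs ` {..<length xs} = set xs"
  by (auto simp: set_conv_nth)

lemma positions_True_inject:
  assumes "length v = length w" and "positions v True = positions w True"
  shows "v = w"
proof (rule nth_equalityI)
  have "{i. i < length w \<and> v ! i} = {i. i < length w \<and> w ! i}"
    using assms by (simp add: positions_def inj_image_eq_iff)
  then show "v ! i = w ! i" if "i < length v" for i
    using that assms(1) by (auto simp: set_eq_iff)
qed (rule assms(1))

(* Letter i of bottom_word records whether the entry i + 1 lies in the bottom row;
   conversely, filling_of_word fills each row increasingly with the positions of its letters. *)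
definition bottom_word :: "nat \<Rightarrow> nat \<Rightarrow> (nat \<times> nat \<Rightarrow> nat) \<Rightarrow> bool list" where
  "bottom_word a b \<tau> = map (\<lambda>i. Suc i \<in> \<tau> ` ({1} \<times> {..<b})) [0..<a + b]"

definition filling_of_word :: "bool list \<Rightarrow> nat \<times> nat \<Rightarrow> nat" where
  "filling_of_word w c =
     (if fst c \<le> 1 \<and> snd c < count_list w (fst c = 1)
      then sorted_list_of_set (positions w (fst c = 1)) ! snd c else 0)"

lemma length_bottom_word: "length (bottom_word a b \<tau>) = a + b"
  by (simp add: bottom_word_def)

context
  fixes a b :: nat and \<tau> :: "nat \<times> nat \<Rightarrow> nat"
  assumes \<tau>: "\<tau> \<in> row_standard a b"
begin

lemma positions_bottom_word_True: "positions (bottom_word a b \<tau>) True = \<tau> ` ({1} \<times> {..<b})"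
proof -
  let ?B = "\<tau> ` ({1} \<times> {..<b})"
  have sub: "?B \<subseteq> {1..a + b}"
    using row_standard_image[OF \<tau>] by (auto simp: boxes_def)
  have "positions (bottom_word a b \<tau>) True = Suc ` {i. i < a + b \<and> Suc i \<in> ?B}"
    unfolding positions_def bottom_word_def
    by (intro arg_cong[where f = "image Suc"] Collect_cong) auto
  also have "\<dots> = ?B"
  proof (rule set_eqI)
    fix x show "x \<in> Suc ` {i. i < a + b \<and> Suc i \<in> ?B} \<longleftrightarrow> x \<in> ?B"
      using sub by (cases x) (auto simp: inj_image_mem_iff simp del: image_iff)
  qed
  finally show ?thesis .
qed

lemma positions_bottom_word_False: "positions (bottom_word a b \<tau>) False = \<tau> ` ({0} \<times> {..<a})"
proof -
  have complement: "E = A" if "E \<union> C = U" "E \<inter> C = {}" "A \<union> C = U" "A \<inter> C = {}"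
    for A C E U :: "nat set"
    using that by blast
  show ?thesis
  proof (rule complement)
    show "\<tau> ` ({0} \<times> {..<a}) \<union> \<tau> ` ({1} \<times> {..<b}) = {1..a + b}"
      using row_standard_image[OF \<tau>] by (simp add: boxes_eq image_Un)
    show "\<tau> ` ({0} \<times> {..<a}) \<inter> \<tau> ` ({1} \<times> {..<b}) = {}"
      by (subst inj_on_image_Int[OF row_standard_inj[OF \<tau>], symmetric]) (auto simp: boxes_eq)
    show "positions (bottom_word a b \<tau>) False \<union> \<tau> ` ({1} \<times> {..<b}) = {1..a + b}"
      using positions_union[of "bottom_word a b \<tau>"] by (simp add: positions_bottom_word_True length_bottom_word)
    show "positions (bottom_word a b \<tau>) False \<inter> \<tau> ` ({1} \<times> {..<b}) = {}"
      using positions_disjoint[of "bottom_word a b \<tau>"] by (simp add: positions_bottom_word_True)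
  qed
qed

lemma count_True_take_bottom_word:
  "count_list (take K (bottom_word a b \<tau>)) True = card {j. (1, j) \<in> boxes a b \<and> \<tau> (1, j) \<le> K}"
proof -
  have "positions (take K (bottom_word a b \<tau>)) True = {k \<in> \<tau> ` ({1} \<times> {..<b}). k \<le> K}"
    by (simp add: positions_take positions_bottom_word_True)
  also have "\<dots> = (\<lambda>j. \<tau> (1, j)) ` {j. (1, j) \<in> boxes a b \<and> \<tau> (1, j) \<le> K}"
    by (auto simp: boxes_iff)
  finally have "count_list (take K (bottom_word a b \<tau>)) True =
      card ((\<lambda>j. \<tau> (1, j)) ` {j. (1, j) \<in> boxes a b \<and> \<tau> (1, j) \<le> K})"
    by (simp add: card_positions[symmetric])
  also have "\<dots> = card {j. (1, j) \<in> boxes a b \<and> \<tau> (1, j) \<le> K}"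
    by (rule card_image, rule inj_onI) (auto dest: inj_onD[OF row_standard_inj[OF \<tau>]])
  finally show ?thesis .
qed

lemma count_True_bottom_word: "count_list (bottom_word a b \<tau>) True = b"
proof -
  have "{j. (1, j) \<in> boxes a b \<and> \<tau> (1, j) \<le> a + b} = {..<b}"
    using row_standard_range[OF \<tau>] by (auto simp: boxes_iff)
  then show ?thesis
    using count_True_take_bottom_word[of "a + b"] by (simp add: length_bottom_word)
qed

lemma column_order_iff_prefix_height:
  assumes "b \<le> a" and "j < b"
  shows "\<tau> (0, j) < \<tau> (1, j) \<longleftrightarrow> 0 < prefix_height (bottom_word a b \<tau>) (2 * j + 1)"
proof -
  have "(1, j) \<in> boxes a b" using assms by (simp add: boxes_iff)
  moreover have "2 * j + 1 \<le> length (bottom_word a b \<tau>)" using assms by (simp add: length_bottom_word)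
  ultimately show ?thesis
    using column_order_iff[OF \<tau> assms] row_standard_le_iff[OF \<tau>, of 1 j "2 * j + 1"]
    by (auto simp: prefix_height_count_True count_True_take_bottom_word)
qed

lemma filling_of_bottom_word: "filling_of_word (bottom_word a b \<tau>) = \<tau>"
proof
  fix c :: "nat \<times> nat"
  let ?w = "bottom_word a b \<tau>"
  have rows: "sorted_list_of_set (positions ?w False) = map (\<lambda>j. \<tau> (0, j)) [0..<a]"
    "sorted_list_of_set (positions ?w True) = map (\<lambda>j. \<tau> (1, j)) [0..<b]"
  proof -
    have row: "\<tau> ` ({r} \<times> A) = (\<lambda>j. \<tau> (r, j)) ` A" for r A by auto
    show "sorted_list_of_set (positions ?w False) = map (\<lambda>j. \<tau> (0, j)) [0..<a]"
      unfolding positions_bottom_word_False row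
      by (rule sorted_list_of_set_image_lessThan) (simp add: row_standard_less[OF \<tau>] boxes_iff)
    show "sorted_list_of_set (positions ?w True) = map (\<lambda>j. \<tau> (1, j)) [0..<b]"
      unfolding positions_bottom_word_True row
      by (rule sorted_list_of_set_image_lessThan) (simp add: row_standard_less[OF \<tau>] boxes_iff)
  qed
  have counts: "count_list ?w False = a" "count_list ?w True = b"
    using count_False_True[of ?w] by (simp_all add: count_True_bottom_word length_bottom_word)
  obtain r j where c: "c = (r, j)" by (cases c)
  consider "r = 0" | "r = 1" | "1 < r" by linarith
  then show "filling_of_word ?w c = \<tau> c"
    by cases (auto simp: c filling_of_word_def counts rows boxes_iff row_standard_outside[OF \<tau>])
qed

end

context
  fixes w :: "bool list" and a b :: nat
  assumes length_w: "length w = a + b" and count_True: "count_list w True = b"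
begin

lemma count_False: "count_list w False = a"
  using count_False_True[of w] length_w count_True by simp

lemma boxes_iff_count: "(r, j) \<in> boxes a b \<longleftrightarrow> r \<le> 1 \<and> j < count_list w (r = 1)"
  by (auto simp: boxes_iff count_False count_True le_Suc_eq)

lemma filling_of_word_row:
  assumes "r \<le> 1"
  shows "filling_of_word w ` ({r} \<times> {..<count_list w (r = 1)}) = positions w (r = 1)"
proof -
  let ?xs = "sorted_list_of_set (positions w (r = 1))"
  have "{r} \<times> {..<count_list w (r = 1)} = Pair r ` {..<length ?xs}"
    by (auto simp: card_positions)
  then have "filling_of_word w ` ({r} \<times> {..<count_list w (r = 1)}) =
      (\<lambda>j. filling_of_word w (r, j)) ` {..<length ?xs}"
    by (simp add: image_image)
  also have "\<dots> = (!) ?xs ` {..<length ?xs}"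
    using assms by (intro image_cong) (auto simp: filling_of_word_def card_positions)
  also have "\<dots> = positions w (r = 1)"
    using image_nth_lessThan_length[of ?xs] by simp
  finally show ?thesis .
qed

lemma filling_of_word_row_standard: "filling_of_word w \<in> row_standard a b"
proof -
  let ?f = "filling_of_word w"
  let ?xs = "\<lambda>r. sorted_list_of_set (positions w (r = 1))"
  have image: "?f ` boxes a b = {1..a + b}"
    using filling_of_word_row[of 0] filling_of_word_row[of 1] positions_union[of w] length_w
    by (simp add: boxes_eq image_Un count_False count_True)
  have entry: "?f (r, j) = ?xs r ! j" if "(r, j) \<in> boxes a b" for r j
    using that by (simp add: boxes_iff_count filling_of_word_def)
  have inj: "inj_on ?f (boxes a b)"
  proof (rule inj_onI)
    fix c c' assume c: "c \<in> boxes a b" and c': "c' \<in> boxes a b" and eq: "?f c = ?f c'"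
    obtain r j r' j' where rj: "c = (r, j)" "c' = (r', j')" by (cases c, cases c')
    have "?f c \<in> positions w (r = 1)" "?f c' \<in> positions w (r' = 1)"
      using c c' filling_of_word_row[of r] filling_of_word_row[of r'] rj
      by (auto simp: boxes_iff_count simp del: mem_Sigma_iff)
    then have "r = r'"
      using positions_disjoint[of w] c c' eq rj by (auto simp: boxes_iff)
    then show "c = c'"
      using c c' eq rj entry nth_eq_iff_index_eq[OF distinct_sorted_list_of_set[of "positions w (r = 1)"]]
      by (auto simp: boxes_iff_count card_positions)
  qed
  have increasing: "?f (r, j) < ?f (r, Suc j)" if "(r, Suc j) \<in> boxes a b" for r j
    using that sorted_wrt_nth_less[OF strict_sorted_list_of_set[of "positions w (r = 1)"], of j "Suc j"]
    by (simp add: boxes_iff_count filling_of_word_def card_positions)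
  have "?f c = 0" if "c \<notin> boxes a b" for c
    using that by (cases c) (auto simp: boxes_iff_count filling_of_word_def)
  with image inj increasing show ?thesis
    by (simp add: row_standard_def bij_betw_def)
qed

lemma bottom_word_filling_of_word: "bottom_word a b (filling_of_word w) = w"
proof (rule positions_True_inject)
  show "positions (bottom_word a b (filling_of_word w)) True = positions w True"
    using filling_of_word_row[of 1]
    by (simp add: positions_bottom_word_True[OF filling_of_word_row_standard] count_True)
qed (simp add: length_bottom_word length_w)

end

lemma height_eq_iff_counts:
  "length w = a + b \<Longrightarrow> height w = int a - int b \<longleftrightarrow> count_list w True = b"
  using count_False_True[of w] by (auto simp: height_def)

lemma bij_betw_bottom_word:
  "bij_betw (bottom_word a b) (row_standard a b) {w. length w = a + b \<and> height w = int a - int b}"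
proof (rule bij_betw_byWitness[where f' = filling_of_word])
  show "\<forall>\<tau>\<in>row_standard a b. filling_of_word (bottom_word a b \<tau>) = \<tau>"
    by (simp add: filling_of_bottom_word)
  show "\<forall>w\<in>{w. length w = a + b \<and> height w = int a - int b}.
      bottom_word a b (filling_of_word w) = w"
    using height_eq_iff_counts bottom_word_filling_of_word by blast
  show "bottom_word a b ` row_standard a b \<subseteq> {w. length w = a + b \<and> height w = int a - int b}"
    by (auto simp: length_bottom_word height_eq_iff_counts count_True_bottom_word)
  show "filling_of_word ` {w. length w = a + b \<and> height w = int a - int b} \<subseteq> row_standard a b"
    by (auto simp: height_eq_iff_counts filling_of_word_row_standard)
qed

lemma num_inversions_eq_crossings:
  assumes "\<tau> \<in> row_standard a b" and "b \<le> a"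
  shows "num_inversions a b \<tau> = crossings (bottom_word a b \<tau>) False"
proof -
  have "sign_changes (\<lambda>j. \<tau> (0, j) < \<tau> (1, j)) b =
      sign_changes (\<lambda>j. 0 < prefix_height (bottom_word a b \<tau>) (2 * j + 1)) b"
    using column_order_iff_prefix_height[OF assms] by (auto simp: sign_changes_def)
  then show ?thesis
    using num_inversions_eq_card_sign_changes[OF assms]
      crossings_eq_card_sign_changes[OF length_bottom_word count_True_bottom_word[OF assms(1)] assms(2)]
    by simp
qed

lemma S_polynomial_eq_crossing_sum:
  assumes "b \<le> a"
  shows "(\<Sum>k\<le>a+b. of_nat (card (S a b k)) * monom (1::'a::comm_semiring_1) k) =
    crossing_sum [:0, 1:] (a + b) (int a - int b) False"
proof -
  have finite: "finite (row_standard a b)"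
    using bij_betw_finite[OF bij_betw_bottom_word] finite_words_length by (rule iffD2)
  have "num_inversions a b \<tau> \<le> a + b" if "\<tau> \<in> row_standard a b" for \<tau>
  proof -
    have "sign_changes (\<lambda>j. \<tau> (0, j) < \<tau> (1, j)) b \<subseteq> {..<b}" by (auto simp: sign_changes_def)
    then have "card (sign_changes (\<lambda>j. \<tau> (0, j) < \<tau> (1, j)) b) \<le> b"
      using card_mono[of "{..<b}"] by fastforce
    then show ?thesis
      using num_inversions_eq_card_sign_changes[OF that assms] by simp
  qed
  then have "(\<Sum>k\<le>a+b. of_nat (card (S a b k)) * monom (1::'a) k) =
      (\<Sum>\<tau>\<in>row_standard a b. monom 1 (num_inversions a b \<tau>))"
    unfolding S_def by (rule sum_card_fibres[OF finite])
  also have "\<dots> = (\<Sum>\<tau>\<in>row_standard a b. [:0, 1:] ^ crossings (bottom_word a b \<tau>) False)"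
    using num_inversions_eq_crossings[OF _ assms]
    by (intro sum.cong refl) (simp only: monom_altdef smult_1_left)
  also have "\<dots> = crossing_sum [:0, 1:] (a + b) (int a - int b) False"
    unfolding crossing_sum_def by (rule sum.reindex_bij_betw[OF bij_betw_bottom_word])
  finally show ?thesis .
qed

theorem mainTheorem10:
  fixes a b :: nat
  assumes "a \<ge> b" and "b \<ge> 1"
  shows "(\<Sum>k\<le>a+b. of_nat (card (S a b k)) * monom (1::int) k)
       = (\<Sum>i\<le>a+b. of_nat (card (D a b i)) * [:1, 1:] ^ i)"
proof -
  have "(\<Sum>k\<le>a+b. of_nat (card (S a b k)) * monom (1::int) k) =
      crossing_sum [:0, 1:] (a + b) (int a - int b) False"
    using assms(1) by (rule S_polynomial_eq_crossing_sum)
  also have "\<dots> = return_sum [:0, 1:] (a + b) (int a - int b)"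
    using assms(1) by (simp add: crossing_sum_eq_return_sum)
  also have "\<dots> = (\<Sum>i\<le>a+b. of_nat (card (D a b i)) * [:1, 1:] ^ i)"
    by (rule D_polynomial_eq_return_sum[symmetric])
  finally show ?thesis .
qed

end
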